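(* Let $\vartheta$ be a recognisable random substitution on $\mathcal A$. Then the map assigning to $y\in X_\vartheta$ its recognisability data $(x,k,(v_i)_{i\in\mathbb Z})$ is continuous, where $x\in X_\vartheta\subset\mathcal A^{\mathbb Z}$, $k\in\mathbb N_0$ and $(v_i)_{i\in\mathbb Z}\in(\mathcal A^+)^{\mathbb Z}$ carry the product of discrete topologies.
   Context: A random substitution $\vartheta$ on a finite alphabet $\mathcal A$ maps each letter to a non-empty finite set of non-empty words, extended to words by $\vartheta(u_1\cdots u_n)=\{w_1\cdots w_n:w_i\in\vartheta(u_i)\}$; $\vartheta^n$ is the $n$-fold composition. $X_\vartheta$ is the set of $x\in\mathcal A^{\mathbb Z}$ all of whose finite subwords are subwords of some word in some $\vartheta^n(a)$, with the product topology and left shift $S$. $\vartheta$ is recognisable if for every $y\in X_\vartheta$ there exist a unique $x\in X_\vartheta$, a unique sequence $(v_i)_{i\in\mathbb Z}$ with $v_i\in\vartheta(x_i)$, and a unique $0\le k<|v_0|$ such that $S^{-k}y=\cdots v_{-2}v_{-1}.v_0v_1\cdots$ (the bi-infinite concatenation with $v_0$ starting at position $0$); the triple $(x,k,(v_i)_{i\in\mathbb Z})$ is the recognisability data of $y$. *)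

theory Defs
  imports "HOL-Analysis.Analysis" "HOL-Library.Sublist"
begin

type_synonym 'a rsubst = "'a \<Rightarrow> 'a list set"

definition rsubst_wf :: "'a rsubst \<Rightarrow> bool" where
  "rsubst_wf \<theta> \<longleftrightarrow> (\<forall>a. \<theta> a \<noteq> {} \<and> finite (\<theta> a) \<and> (\<forall>w\<in>\<theta> a. w \<noteq> []))"

definition subst_word :: "'a rsubst \<Rightarrow> 'a list \<Rightarrow> 'a list set" where
  "subst_word \<theta> u = {concat ws | ws. length ws = length u \<and> (\<forall>i<length u. ws ! i \<in> \<theta> (u ! i))}"

definition subst_pow :: "'a rsubst \<Rightarrow> nat \<Rightarrow> 'a \<Rightarrow> 'a list set" where
  "subst_pow \<theta> n a = ((\<lambda>W. \<Union>w\<in>W. subst_word \<theta> w) ^^ n) {[a]}"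

definition legal :: "'a rsubst \<Rightarrow> 'a list \<Rightarrow> bool" where
  "legal \<theta> u \<longleftrightarrow> (\<exists>n a w. w \<in> subst_pow \<theta> n a \<and> sublist u w)"

definition subword :: "(int \<Rightarrow> 'a) \<Rightarrow> int \<Rightarrow> nat \<Rightarrow> 'a list" where
  "subword x i n = map (\<lambda>j. x (i + int j)) [0..<n]"

definition subshift :: "'a rsubst \<Rightarrow> (int \<Rightarrow> 'a) set" where
  "subshift \<theta> = {x. \<forall>i n. legal \<theta> (subword x i n)}"

text \<open>Starting position of v_i in the bi-infinite concatenation with v_0 starting at 0.\<close>
definition start_pos :: "(int \<Rightarrow> 'a list) \<Rightarrow> int \<Rightarrow> int" where
  "start_pos v i = (if 0 \<le> i then (\<Sum>j<nat i. int (length (v (int j))))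
                    else - (\<Sum>j\<in>{i..<0}. int (length (v j))))"

definition is_concat :: "(int \<Rightarrow> 'a list) \<Rightarrow> (int \<Rightarrow> 'a) \<Rightarrow> bool" where
  "is_concat v z \<longleftrightarrow> (\<forall>i m. m < length (v i) \<longrightarrow> z (start_pos v i + int m) = v i ! m)"

text \<open>Left shift S: (S y)_i = y_{i+1}; hence (S^{-k} y)_i = y_{i-k}.\<close>
definition inv_shift_pow :: "nat \<Rightarrow> (int \<Rightarrow> 'a) \<Rightarrow> (int \<Rightarrow> 'a)" where
  "inv_shift_pow k y = (\<lambda>i. y (i - int k))"

definition is_recog_data :: "'a rsubst \<Rightarrow> (int \<Rightarrow> 'a) \<Rightarrow> (int \<Rightarrow> 'a) \<times> nat \<times> (int \<Rightarrow> 'a list) \<Rightarrow> bool" where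
  "is_recog_data \<theta> y d \<longleftrightarrow> (case d of (x, k, v) \<Rightarrow>
      x \<in> subshift \<theta> \<and> (\<forall>i. v i \<in> \<theta> (x i)) \<and> k < length (v 0) \<and>
      is_concat v (inv_shift_pow k y))"

definition recognisable :: "'a rsubst \<Rightarrow> bool" where
  "recognisable \<theta> \<longleftrightarrow> (\<forall>y\<in>subshift \<theta>. \<exists>!d. is_recog_data \<theta> y d)"

definition recog_data :: "'a rsubst \<Rightarrow> (int \<Rightarrow> 'a) \<Rightarrow> (int \<Rightarrow> 'a) \<times> nat \<times> (int \<Rightarrow> 'a list)" where
  "recog_data \<theta> y = (THE d. is_recog_data \<theta> y d)"

definition seq_top :: "(int \<Rightarrow> 'b) topology" where
  "seq_top = product_topology (\<lambda>_. discrete_topology UNIV) UNIV"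

end

theory Submission
  imports Defs
begin

text \<open>
  Each defining condition of recognisability data looks at only finitely many coordinates of
  \<open>y\<close>, \<open>x\<close> and \<open>v\<close> (and at \<open>k\<close>), so the relation ``\<open>d\<close> is recognisability data of \<open>y\<close>'' is
  closed in the product space. Its values lie in a compact set: \<open>x\<close> ranges over the full shift
  on a finite alphabet, each \<open>v i\<close> over the finitely many words of \<open>\<vartheta>\<close>, and \<open>k\<close> stays below the
  maximal word length. Recognisability says that on the subshift this relation is the graph of
  \<open>recog_data \<vartheta>\<close>, and a map whose graph is closed with values in a compact set is continuous,
  because projecting along a compact factor is a closed map.
\<close>

lemma continuous_map_from_closed_relation:
  assumes K: "compactin Y K"
    and R: "closedin (prod_topology X Y) R"
    and graph: "\<And>x. x \<in> topspace X \<inter> S \<Longrightarrow> (x, f x) \<in> R \<and> f x \<in> K"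
    and unique: "\<And>x y. x \<in> topspace X \<inter> S \<Longrightarrow> (x, y) \<in> R \<Longrightarrow> y \<in> K \<Longrightarrow> y = f x"
  shows "continuous_map (subtopology X S) Y f"
proof -
  let ?X = "subtopology X S" and ?Y = "subtopology Y K"
  have RK: "closedin (prod_topology ?X ?Y) ((topspace ?X \<times> K) \<inter> R)"
    by (metis closedin_subtopology_Int_closed R subtopology_Times subtopology_restrict topspace_subtopology)
  have "continuous_map ?X ?Y f"
    unfolding continuous_map_closedin
  proof (intro conjI allI impI)
    show "f \<in> topspace ?X \<rightarrow> topspace ?Y"
      using graph compactin_subset_topspace[OF K] by auto
  next
    fix C assume C: "closedin ?Y C"
    have "C \<subseteq> K" using closedin_subset[OF C] by simp
    have "{x \<in> topspace ?X. f x \<in> C} = fst ` ((topspace ?X \<times> K) \<inter> R \<inter> (topspace ?X \<times> C))"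
    proof (intro equalityI subsetI)
      fix x assume "x \<in> {x \<in> topspace ?X. f x \<in> C}"
      then have "(x, f x) \<in> (topspace ?X \<times> K) \<inter> R \<inter> (topspace ?X \<times> C)"
        using graph by auto
      then show "x \<in> fst ` ((topspace ?X \<times> K) \<inter> R \<inter> (topspace ?X \<times> C))"
        by (metis fst_conv image_eqI)
    next
      fix x assume "x \<in> fst ` ((topspace ?X \<times> K) \<inter> R \<inter> (topspace ?X \<times> C))"
      then obtain y where "x \<in> topspace ?X" "y \<in> C" "(x, y) \<in> R"
        by auto
      then show "x \<in> {x \<in> topspace ?X. f x \<in> C}"
        using unique \<open>C \<subseteq> K\<close> by auto
    qed
    moreover have "closedin (prod_topology ?X ?Y) ((topspace ?X \<times> K) \<inter> R \<inter> (topspace ?X \<times> C))"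
      using C closedin_topspace[of ?X] by (intro closedin_Int[OF RK]) (simp add: closedin_prod_Times_iff)
    ultimately show "closedin ?X {x \<in> topspace ?X. f x \<in> C}"
      using closed_map_fst[OF compact_space_subtopology[OF K]] unfolding closed_map_def by metis
  qed
  then show ?thesis
    using continuous_map_in_subtopology by blast
qed

lemma closedin_determined_by_discrete:
  assumes g: "continuous_map T (discrete_topology U) g"
    and P: "\<And>p q. p \<in> topspace T \<Longrightarrow> q \<in> topspace T \<Longrightarrow> g p = g q \<Longrightarrow> P p \<Longrightarrow> P q"
  shows "closedin T {p \<in> topspace T. P p}"
proof -
  let ?A = "g ` {p \<in> topspace T. P p}"
  have "{p \<in> topspace T. P p} = {p \<in> topspace T. g p \<in> ?A}"
  proof (intro equalityI subsetI)
    fix p assume "p \<in> {p \<in> topspace T. g p \<in> ?A}"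
    then obtain q where "p \<in> topspace T" "q \<in> topspace T" "P q" "g q = g p"
      by auto
    then show "p \<in> {p \<in> topspace T. P p}"
      using P by blast
  qed auto
  moreover have "closedin (discrete_topology U) ?A"
    using continuous_map_image_subset_topspace[OF g] by auto
  ultimately show ?thesis
    using closedin_continuous_map_preimage[OF g] by metis
qed

lemma continuous_map_discrete_paired:
  assumes "continuous_map T (discrete_topology UNIV) f" "continuous_map T (discrete_topology UNIV) g"
  shows "continuous_map T (discrete_topology UNIV) (\<lambda>x. (f x, g x))"
  using continuous_map_pairedI[OF assms] by (simp flip: prod_topology_discrete_topology)

lemma continuous_map_restrict_discrete:
  fixes J :: "'i set"
  assumes "finite J"
  shows "continuous_map (product_topology (\<lambda>_. discrete_topology UNIV) UNIV) (discrete_topology UNIV)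
           (\<lambda>f :: 'i \<Rightarrow> 'b. restrict f J)"
  using assms
proof (induction J rule: finite_induct)
  case empty
  then show ?case by simp
next
  case (insert a J)
  have eq: "(\<lambda>f. restrict f (insert a J)) =
             (\<lambda>(c, h) j. if j = a then c else h j) \<circ> (\<lambda>f :: 'i \<Rightarrow> 'b. (f a, restrict f J))"
    by (auto simp: restrict_def fun_eq_iff)
  have pair: "continuous_map (product_topology (\<lambda>_. discrete_topology UNIV) UNIV) (discrete_topology UNIV)
              (\<lambda>f :: 'i \<Rightarrow> 'b. (f a, restrict f J))"
    by (rule continuous_map_discrete_paired[OF continuous_map_product_projection[OF UNIV_I] insert.IH])
  show ?case
    unfolding eq by (rule continuous_map_compose[OF pair]) simp
qed

lemma topspace_seq_top [simp]: "topspace seq_top = UNIV"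
  by (simp add: seq_top_def PiE_UNIV_domain)

lemma continuous_map_seq_top_restrict:
  "finite J \<Longrightarrow> continuous_map seq_top (discrete_topology UNIV) (\<lambda>f. restrict f J)"
  unfolding seq_top_def by (rule continuous_map_restrict_discrete)

abbreviation recog_data_topology :: "((int \<Rightarrow> 'a) \<times> nat \<times> (int \<Rightarrow> 'b)) topology" where
  "recog_data_topology \<equiv> prod_topology seq_top (prod_topology (discrete_topology UNIV) seq_top)"

lemma closedin_locally_determined:
  fixes P :: "'i \<Rightarrow> (int \<Rightarrow> 'y) \<Rightarrow> (int \<Rightarrow> 'x) \<Rightarrow> nat \<Rightarrow> (int \<Rightarrow> 'v) \<Rightarrow> bool"
  assumes fin: "\<And>a. finite (J a)"
    and local: "\<And>a y x k v y' x' v'. (\<forall>j\<in>J a. y j = y' j \<and> x j = x' j \<and> v j = v' j) \<Longrightarrow>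
                  P a y x k v \<Longrightarrow> P a y' x' k v'"
  shows "closedin (prod_topology seq_top recog_data_topology) {(y, x, k, v). \<forall>a. P a y x k v}"
proof -
  let ?T = "prod_topology seq_top recog_data_topology
              :: ((int \<Rightarrow> 'y) \<times> (int \<Rightarrow> 'x) \<times> nat \<times> (int \<Rightarrow> 'v)) topology"
  have "closedin ?T {p \<in> topspace ?T. case p of (y, x, k, v) \<Rightarrow> P a y x k v}" for a
  proof -
    define g where "g = map_prod (\<lambda>y :: int \<Rightarrow> 'y. restrict y (J a))
      (map_prod (\<lambda>x :: int \<Rightarrow> 'x. restrict x (J a)) (map_prod (id :: nat \<Rightarrow> nat) (\<lambda>v :: int \<Rightarrow> 'v. restrict v (J a))))"
    have "continuous_map ?T (prod_topology (discrete_topology UNIV) (prod_topology (discrete_topology UNIV)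
            (prod_topology (discrete_topology UNIV) (discrete_topology UNIV)))) g"
      by (simp add: g_def map_prod_def continuous_map_prod_top continuous_map_seq_top_restrict fin)
    then have "continuous_map ?T (discrete_topology UNIV) g"
      by (simp flip: prod_topology_discrete_topology)
    then show ?thesis
    proof (rule closedin_determined_by_discrete)
      fix p q
      assume "g p = g q" and "case p of (y, x, k, v) \<Rightarrow> P a y x k v"
      then show "case q of (y, x, k, v) \<Rightarrow> P a y x k v"
        using local[of a] by (auto simp: g_def restrict_def fun_eq_iff split: prod.splits) metis
    qed
  qed
  then have "closedin ?T (\<Inter>a. {p \<in> topspace ?T. case p of (y, x, k, v) \<Rightarrow> P a y x k v})"
    by blast
  moreover have "(\<Inter>a. {p \<in> topspace ?T. case p of (y, x, k, v) \<Rightarrow> P a y x k v}) = {(y, x, k, v). \<forall>a. P a y x k v}"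
    by (auto simp: topspace_prod_topology)
  ultimately show ?thesis
    by simp
qed

lemma start_pos_cong:
  assumes "\<forall>j\<in>{min 0 i..max 0 i}. v j = v' j"
  shows "start_pos v i = start_pos v' i"
  unfolding start_pos_def using assms by (auto intro!: sum.cong)

lemma subword_cong: "\<forall>j\<in>{i..<i + int n}. x j = x' j \<Longrightarrow> subword x i n = subword x' i n"
  by (auto simp: subword_def)

lemma is_concat_inv_shift_pow_iff:
  "is_concat v (inv_shift_pow k y) \<longleftrightarrow>
     (\<forall>i m t. m < length (v i) \<longrightarrow> start_pos v i + int m - int k = t \<longrightarrow> y t = v i ! m)"
  by (auto simp: is_concat_def inv_shift_pow_def)

lemma closedin_recog_relation:
  "closedin (prod_topology seq_top recog_data_topology) {(y, d). is_recog_data \<theta> y d}"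
proof -
  let ?T = "prod_topology seq_top recog_data_topology
              :: ((int \<Rightarrow> 'a) \<times> (int \<Rightarrow> 'a) \<times> nat \<times> (int \<Rightarrow> 'a list)) topology"
  have in_subshift: "closedin ?T {(y, x, k, v). \<forall>a. case a of (i, n) \<Rightarrow> legal \<theta> (subword x i n)}"
    by (rule closedin_locally_determined[where J = "\<lambda>(i, n). {i..<i + int n}"])
      (clarsimp; metis subword_cong)+
  have letters: "closedin ?T {(y, x, k, v). \<forall>i. v i \<in> \<theta> (x i)}"
    by (rule closedin_locally_determined[where J = "\<lambda>i. {i}"]) auto
  have offset: "closedin ?T {(y, x, k, v). \<forall>u :: unit. k < length (v 0)}"
    by (rule closedin_locally_determined[where J = "\<lambda>_. {0}"]) auto
  \<comment> \<open>the target position \<open>t\<close> is quantified so that each instance reads a fixed finite window of \<open>y\<close>\<close>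
  have concat: "closedin ?T {(y, x, k, v). \<forall>a. case a of (i, m, t) \<Rightarrow>
                  m < length (v i) \<longrightarrow> start_pos v i + int m - int k = t \<longrightarrow> y t = v i ! m}"
  proof (rule closedin_locally_determined[where J = "\<lambda>(i, m, t). {min 0 i..max 0 i} \<union> {t}"])
    fix a :: "int \<times> nat \<times> int" and y x y' x' :: "int \<Rightarrow> 'a" and k :: nat and v v' :: "int \<Rightarrow> 'a list"
    assume "\<forall>j\<in>(case a of (i, m, t) \<Rightarrow> {min 0 i..max 0 i} \<union> {t}). y j = y' j \<and> x j = x' j \<and> v j = v' j"
    moreover obtain i m t where "a = (i, m, t)"
      by (cases a)
    ultimately have "start_pos v i = start_pos v' i" "v i = v' i" "y t = y' t"
      using start_pos_cong[of i v v'] by auto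
    then show "(case a of (i, m, t) \<Rightarrow> m < length (v i) \<longrightarrow> start_pos v i + int m - int k = t \<longrightarrow> y t = v i ! m) \<Longrightarrow>
               (case a of (i, m, t) \<Rightarrow> m < length (v' i) \<longrightarrow> start_pos v' i + int m - int k = t \<longrightarrow> y' t = v' i ! m)"
      using \<open>a = (i, m, t)\<close> by simp
  qed auto
  have "{(y, d). is_recog_data \<theta> y d} =
          {(y, x, k, v). \<forall>a. case a of (i, n) \<Rightarrow> legal \<theta> (subword x i n)} \<inter> {(y, x, k, v). \<forall>i. v i \<in> \<theta> (x i)} \<inter>
          {(y, x, k, v). \<forall>u :: unit. k < length (v 0)} \<inter>
          {(y, x, k, v). \<forall>a. case a of (i, m, t) \<Rightarrow>
             m < length (v i) \<longrightarrow> start_pos v i + int m - int k = t \<longrightarrow> y t = v i ! m}"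
    by (auto simp: is_recog_data_def subshift_def is_concat_inv_shift_pow_iff)
  then show ?thesis
    using in_subshift letters offset concat by (metis (no_types, lifting) closedin_Int)
qed

lemma compactin_seq_top_PiE: "finite W \<Longrightarrow> compactin seq_top (PiE UNIV (\<lambda>_. W))"
  unfolding seq_top_def by (subst compactin_PiE) (simp add: compactin_discrete_topology)

lemma compactin_seq_top_UNIV: "compactin seq_top (UNIV :: (int \<Rightarrow> 'a::finite) set)"
  using compactin_seq_top_PiE[of "UNIV :: 'a set"] by (simp add: PiE_UNIV_domain)

lemma recog_data_bounded:
  fixes \<theta> :: "('a::finite) rsubst"
  assumes "rsubst_wf \<theta>"
  obtains K :: "((int \<Rightarrow> 'a) \<times> nat \<times> (int \<Rightarrow> 'a list)) set"
  where "compactin recog_data_topology K" and "\<And>y d. is_recog_data \<theta> y d \<Longrightarrow> d \<in> K"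
proof
  let ?W = "\<Union>a. \<theta> a"
  have "finite ?W"
    using assms by (auto simp: rsubst_wf_def)
  let ?L = "Suc (Max (length ` ?W))"
  show "compactin recog_data_topology ((UNIV :: (int \<Rightarrow> 'a) set) \<times> {..<?L} \<times> PiE UNIV (\<lambda>_. ?W))"
    using compactin_seq_top_PiE[OF \<open>finite ?W\<close>]
    by (simp add: compactin_Times compactin_seq_top_UNIV compactin_discrete_topology)
  fix y d
  assume "is_recog_data \<theta> y d"
  moreover obtain x k v where "d = (x, k, v)"
    by (cases d)
  ultimately have "\<forall>i. v i \<in> ?W" "k < length (v 0)"
    by (auto simp: is_recog_data_def)
  moreover have "length (v 0) \<le> Max (length ` ?W)"
    using \<open>finite ?W\<close> \<open>\<forall>i. v i \<in> ?W\<close> by (intro Max_ge) auto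
  ultimately show "d \<in> UNIV \<times> {..<?L} \<times> PiE UNIV (\<lambda>_. ?W)"
    using \<open>d = (x, k, v)\<close> by auto
qed

lemma is_recog_data_recog_data:
  "recognisable \<theta> \<Longrightarrow> y \<in> subshift \<theta> \<Longrightarrow> is_recog_data \<theta> y (recog_data \<theta> y)"
  unfolding recognisable_def recog_data_def by (metis theI')

lemma recog_data_eqI:
  "recognisable \<theta> \<Longrightarrow> y \<in> subshift \<theta> \<Longrightarrow> is_recog_data \<theta> y d \<Longrightarrow> recog_data \<theta> y = d"
  unfolding recognisable_def recog_data_def by (metis the1_equality)

theorem mainTheorem6:
  fixes \<theta> :: "('a::finite) rsubst"
  assumes "rsubst_wf \<theta>"
    and "recognisable \<theta>"
  shows "continuous_map (subtopology seq_top (subshift \<theta>))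
           (prod_topology seq_top (prod_topology (discrete_topology (UNIV :: nat set)) seq_top))
           (recog_data \<theta>)"
proof -
  obtain K :: "((int \<Rightarrow> 'a) \<times> nat \<times> (int \<Rightarrow> 'a list)) set"
    where K: "compactin recog_data_topology K" and bound: "\<And>y d. is_recog_data \<theta> y d \<Longrightarrow> d \<in> K"
    using recog_data_bounded[OF assms(1)] by blast
  show ?thesis
  proof (rule continuous_map_from_closed_relation[OF K closedin_recog_relation])
    fix y assume "y \<in> topspace seq_top \<inter> subshift \<theta>"
    then have "is_recog_data \<theta> y (recog_data \<theta> y)"
      using is_recog_data_recog_data[OF assms(2)] by simp
    then show "(y, recog_data \<theta> y) \<in> {(y, d). is_recog_data \<theta> y d} \<and> recog_data \<theta> y \<in> K"
      using bound by simp
  next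
    fix y d assume "y \<in> topspace seq_top \<inter> subshift \<theta>" "(y, d) \<in> {(y, d). is_recog_data \<theta> y d}"
    then show "d = recog_data \<theta> y"
      using recog_data_eqI[OF assms(2)] by auto
  qed
qed

end
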